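(* Let $A$ be a finite alphabet. Consider two words $u,u'\in A^*$, both of richness $m$, with rich factorizations $u=u_1a_1\cdots u_ma_mv$ and $u'=u'_1a_1\cdots u'_ma_mv'$ (with the same letters $a_1,\ldots,a_m$). Suppose that $v\sim_n v'$ and that $u_i\sim_{n+1}u'_i$ for all $i=1,\ldots,m$. Then $u\sim_{n+m}u'$.
   Context: A word is rich if every letter of $A$ occurs in it, and poor otherwise. $u$ is $\ell$-rich if $u=w_1\cdots w_\ell w'$ with $w_1,\ldots,w_\ell$ rich; the richness of $u$ is the largest such $\ell$. The rich factorization of $u$ is defined inductively: if $u$ is poor it is $u=v$ with $m=0$; otherwise $u_1a_1$ ($a_1$ a letter) is the shortest rich prefix of $u$, followed by the rich factorization $u_2a_2\cdots u_ma_mv$ of the remaining suffix. Thus $u=u_1a_1\cdots u_ma_mv$ with $m$ the richness of $u$. $u\sim_n v$ iff $u,v$ have the same (scattered) subwords of length at most $n$. *)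

theory Defs
  imports Main "HOL-Library.Sublist"
begin

definition rich :: "'a set \<Rightarrow> 'a list \<Rightarrow> bool" where
  "rich A w \<longleftrightarrow> A \<subseteq> set w"

definition simeq :: "nat \<Rightarrow> 'a list \<Rightarrow> 'a list \<Rightarrow> bool" where
  "simeq n u v \<longleftrightarrow> (\<forall>w. length w \<le> n \<longrightarrow> (subseq w u \<longleftrightarrow> subseq w v))"

definition richness :: "'a set \<Rightarrow> 'a list \<Rightarrow> nat" where
  "richness A u = (GREATEST l. \<exists>ws w'. length ws = l \<and> (\<forall>x\<in>set ws. rich A x) \<and> u = concat ws @ w')"

text \<open>Rich factorization u = u_1 a_1 ... u_m a_m v, unfolding the inductive definition:
  u_i a_i is the shortest rich prefix of the remaining suffix (i.e. u_i a_i rich, u_i poor),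
  and the final remainder v is poor.\<close>
fun rich_factorization :: "'a set \<Rightarrow> 'a list \<Rightarrow> 'a list list \<Rightarrow> 'a list \<Rightarrow> 'a list \<Rightarrow> bool" where
  "rich_factorization A u [] [] v \<longleftrightarrow> \<not> rich A u \<and> u = v"
| "rich_factorization A u (x # xs) (a # as) v \<longleftrightarrow>
     rich A u \<and> (\<exists>r. u = x @ [a] @ r \<and> rich A (x @ [a]) \<and> \<not> rich A x
                        \<and> rich_factorization A r xs as v)"
| "rich_factorization A u _ _ v \<longleftrightarrow> False"

end

theory Submission
  imports Defs
begin

text \<open>Induction on the number of rich blocks. Write u = y r and u' = y' r' with y = u_1 a_1
  and y' = u'_1 a_1, so that y ~_(n+1) y', y' is rich, and r ~_(n+m-1) r' by induction.
  Since r and r' each begin with m - 1 rich words, every word of length at most m - 1 is a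
  subword of both. Split an embedding of a subword w of u, |w| <= n + m, as w = w1 w2 with w1
  in y and w2 in r. If |w1| > n, the first n + 1 letters of w embed in y' and the rest, of
  length at most m - 1, in r'. If 0 < |w1| <= n, both parts transfer directly. If w1 is empty,
  the first letter of w occurs in the rich word y' and the rest, of length at most n + m - 1,
  embeds in r'.\<close>

definition universal :: "'a set \<Rightarrow> nat \<Rightarrow> 'a list \<Rightarrow> bool" where
  "universal A k r \<longleftrightarrow> (\<forall>z. set z \<subseteq> A \<longrightarrow> length z \<le> k \<longrightarrow> subseq z r)"

lemma universal_0: "universal A 0 r"
  unfolding universal_def by simp

lemma universal_append_rich:
  assumes "rich A y" and "universal A k r"
  shows "universal A (Suc k) (y @ r)"
  unfolding universal_def
proof (intro allI impI)
  fix z :: "'a list"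
  assume z: "set z \<subseteq> A" "length z \<le> Suc k"
  show "subseq z (y @ r)"
  proof (cases z)
    case Nil
    then show ?thesis by simp
  next
    case (Cons c z')
    with z assms(1) have "subseq [c] y"
      by (auto simp: rich_def subseq_singleton_left)
    moreover from z Cons assms(2) have "subseq z' r"
      by (simp add: universal_def)
    ultimately have "subseq ([c] @ z') (y @ r)"
      by (rule list_emb_append_mono)
    with Cons show ?thesis by simp
  qed
qed

lemma universal_of_rich_factorization:
  "rich_factorization A u us as v \<Longrightarrow> universal A (length as) u"
proof (induction A u us as v rule: rich_factorization.induct)
  case (2 A u x xs a as v)
  then obtain r where "u = (x @ [a]) @ r" "rich A (x @ [a])" "rich_factorization A r xs as v"
    by auto
  with 2 show ?case
    by (simp add: universal_append_rich del: append_assoc)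
qed (simp_all add: universal_0)

lemma set_mono_subseq: "subseq xs ys \<Longrightarrow> set xs \<subseteq> set ys"
  by (induction rule: list_emb.induct) auto

lemma simeq_sym: "simeq n u v \<Longrightarrow> simeq n v u"
  unfolding simeq_def by blast

lemma subseq_append_right_transfer:
  assumes "simeq n x x'" and "length w \<le> n" and "subseq w (x @ z)"
  shows "subseq w (x' @ z)"
proof -
  obtain w1 w2 where w: "w = w1 @ w2" "subseq w1 x" "subseq w2 z"
    using subseq_appendE[OF assms(3)] by blast
  with assms(1,2) have "subseq w1 x'"
    by (auto simp: simeq_def)
  with w show ?thesis
    by (simp add: list_emb_append_mono)
qed

lemma simeq_append_right:
  assumes "simeq n x x'"
  shows "simeq n (x @ z) (x' @ z)"
  unfolding simeq_def
  using subseq_append_right_transfer[OF assms] subseq_append_right_transfer[OF simeq_sym[OF assms]]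
  by blast

lemma subseq_transfer_rich_block:
  assumes y: "simeq (Suc n) y y'" "rich A y'"
    and r: "simeq N r r'" "universal A (N - n) r'"
    and w: "set w \<subseteq> A" "length w \<le> Suc N" "subseq w (y @ r)"
  shows "subseq w (y' @ r')"
proof -
  obtain w1 w2 where split: "w = w1 @ w2" "subseq w1 y" "subseq w2 r"
    using subseq_appendE[OF w(3)] by blast
  consider "Suc n \<le> length w1" | "w1 = []" | "w1 \<noteq> []" "length w1 \<le> n"
    by linarith
  then show ?thesis
  proof cases
    case 1
    define p where "p = take (Suc n) w1"
    define q where "q = drop (Suc n) w1 @ w2"
    have "subseq p w1"
      unfolding p_def by (metis append_take_drop_id prefix_imp_subseq prefixI)
    with split(2) 1 y(1) have "subseq p y'"
      by (auto simp: simeq_def p_def dest: subseq_order.order_trans)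
    moreover have "subseq q r'"
    proof -
      from split w(1) have "set q \<subseteq> A"
        by (auto simp: q_def dest: in_set_dropD)
      moreover from split(1) w(2) 1 have "length q \<le> N - n"
        by (simp add: q_def)
      ultimately show ?thesis
        using r(2) by (simp add: universal_def)
    qed
    moreover have "w = p @ q"
      using split(1) by (simp add: p_def q_def)
    ultimately show ?thesis
      by (simp add: list_emb_append_mono)
  next
    case 2
    show ?thesis
    proof (cases w)
      case (Cons c w')
      with w(1) y(2) have "subseq [c] y'"
        by (auto simp: rich_def subseq_singleton_left)
      moreover from split 2 Cons have "subseq w' r"
        by (auto intro: subseq_Cons')
      with w(2) Cons r(1) have "subseq w' r'"
        by (auto simp: simeq_def)
      ultimately have "subseq ([c] @ w') (y' @ r')"
        by (rule list_emb_append_mono)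
      with Cons show ?thesis by simp
    qed simp
  next
    case 3
    with split(2) y(1) have "subseq w1 y'"
      by (auto simp: simeq_def)
    moreover have "subseq w2 r'"
    proof -
      from 3 split(1) w(2) have "length w2 \<le> N"
        by (cases w1) auto
      with split(3) r(1) show ?thesis
        by (simp add: simeq_def)
    qed
    ultimately show ?thesis
      using split(1) by (simp add: list_emb_append_mono)
  qed
qed

lemma simeq_append_rich_block:
  assumes "simeq (Suc n) y y'" "rich A y" "rich A y'"
    and "simeq N r r'" "universal A (N - n) r" "universal A (N - n) r'"
    and "set (y @ r) \<subseteq> A" "set (y' @ r') \<subseteq> A"
  shows "simeq (Suc N) (y @ r) (y' @ r')"
  unfolding simeq_def
proof (intro allI impI iffI)
  fix w :: "'a list"
  assume len: "length w \<le> Suc N"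
  show "subseq w (y' @ r')" if "subseq w (y @ r)"
    using subseq_transfer_rich_block[OF assms(1,3,4,6) _ len that]
      set_mono_subseq[OF that] assms(7) by blast
  show "subseq w (y @ r)" if "subseq w (y' @ r')"
    using subseq_transfer_rich_block[OF simeq_sym[OF assms(1)] assms(2) simeq_sym[OF assms(4)] assms(5) _ len that]
      set_mono_subseq[OF that] assms(8) by blast
qed

lemma simeq_of_rich_factorizations:
  assumes "rich_factorization A u us as v" "rich_factorization A u' us' as v'"
    and "set u \<subseteq> A" "set u' \<subseteq> A" "simeq n v v'"
    and "\<forall>i<length as. simeq (Suc n) (us ! i) (us' ! i)"
  shows "simeq (n + length as) u u'"
  using assms
proof (induction as arbitrary: u u' us us')
  case Nil
  have "u = v" using Nil.prems(1) by (cases us) simp_all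
  moreover have "u' = v'" using Nil.prems(2) by (cases us') simp_all
  ultimately show ?case using Nil.prems(5) by simp
next
  case (Cons a as)
  obtain x xs r where u: "u = (x @ [a]) @ r" "rich A (x @ [a])" "rich_factorization A r xs as v"
    and us: "us = x # xs"
    using Cons.prems(1) by (cases us) auto
  obtain x' xs' r' where u': "u' = (x' @ [a]) @ r'" "rich A (x' @ [a])" "rich_factorization A r' xs' as v'"
    and us': "us' = x' # xs'"
    using Cons.prems(2) by (cases us') auto
  have "simeq (Suc n) x x'"
    using Cons.prems(6)[rule_format, of 0] us us' by simp
  then have block: "simeq (Suc n) (x @ [a]) (x' @ [a])"
    by (rule simeq_append_right)
  have tail: "simeq (n + length as) r r'"
  proof (rule Cons.IH[OF u(3) u'(3)])
    show "set r \<subseteq> A" "set r' \<subseteq> A"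
      using Cons.prems(3,4) u(1) u'(1) by auto
    show "\<forall>i<length as. simeq (Suc n) (xs ! i) (xs' ! i)"
      using Cons.prems(6) us us' by auto
  qed (rule Cons.prems(5))
  have "universal A (n + length as - n) r" "universal A (n + length as - n) r'"
    using universal_of_rich_factorization[OF u(3)] universal_of_rich_factorization[OF u'(3)]
    by simp_all
  from simeq_append_rich_block[OF block u(2) u'(2) tail this] Cons.prems(3,4) u(1) u'(1)
  show ?case
    by simp
qed

theorem lemma5:
  fixes A :: "'a set" and u u' v v' :: "'a list" and us us' :: "'a list list"
    and as :: "'a list" and m n :: nat
  assumes "finite A"
    and "set u \<subseteq> A" and "set u' \<subseteq> A"
    and "richness A u = m" and "richness A u' = m"
    and "rich_factorization A u us as v" and "rich_factorization A u' us' as v'"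
    and "length as = m"
    and "simeq n v v'"
    and "\<forall>i<m. simeq (Suc n) (us ! i) (us' ! i)"
  shows "simeq (n + m) u u'"
  using simeq_of_rich_factorizations[OF assms(6,7,2,3,9)] assms(8,10) by simp

end
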